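(* Let $0<c<1$, let $K=\mathbb{C}(\lambda,\sqrt{1-c^2\lambda})$ and consider the Legendre elliptic curve $L_\lambda: Y^2=X(X-1)(X-\lambda)$ over $K$. Then the point $$B(\lambda)=\left(\frac{(1-c^2)\lambda}{1-c^2\lambda},\ \frac{c\sqrt{1-c^2}\,\lambda(1-\lambda)}{(1-c^2\lambda)\sqrt{1-c^2\lambda}}\right)\in L_\lambda(K)$$ (the billiard section) is not a torsion point of $L_\lambda(K)$.
   Context: This section encodes the billiard map of the elliptical billiard $x^2+y^2/(1-c^2)=1$ (foci $(\pm c,0)$) on the caustic with parameter $s=c^2\lambda$, transported to the Legendre model. *)

theory Defs
  imports Complex_Main "HOL-Computational_Algebra.Polynomial" "HOL-Computational_Algebra.Fraction_Field"
begin

text \<open>Points of a Weierstrass curve y^2 = x^3 + a2 x^2 + a4 x + a6 over a field: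
  None is the point at infinity O, Some (x,y) an affine point.\<close>

definition on_curve :: "'a::field \<Rightarrow> 'a \<Rightarrow> 'a \<Rightarrow> ('a \<times> 'a) option \<Rightarrow> bool" where
  "on_curve a2 a4 a6 P = (case P of None \<Rightarrow> True
     | Some (x, y) \<Rightarrow> y^2 = x^3 + a2 * x^2 + a4 * x + a6)"

text \<open>Chord-tangent group law (valid for points on the curve, char not 2).\<close>
definition ec_add :: "'a::field \<Rightarrow> 'a \<Rightarrow> 'a \<Rightarrow> ('a \<times> 'a) option \<Rightarrow> ('a \<times> 'a) option \<Rightarrow> ('a \<times> 'a) option" where
  "ec_add a2 a4 a6 P Q = (case P of None \<Rightarrow> Q | Some (x1, y1) \<Rightarrow>
     (case Q of None \<Rightarrow> P | Some (x2, y2) \<Rightarrow>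
       (if x1 = x2 \<and> y1 + y2 = 0 then None
        else let l = (if x1 = x2 then (3 * x1^2 + 2 * a2 * x1 + a4) / (2 * y1)
                      else (y2 - y1) / (x2 - x1));
                 x3 = l^2 - a2 - x1 - x2
             in Some (x3, - (y1 + l * (x3 - x1))))))"

fun ec_mult :: "'a::field \<Rightarrow> 'a \<Rightarrow> 'a \<Rightarrow> nat \<Rightarrow> ('a \<times> 'a) option \<Rightarrow> ('a \<times> 'a) option" where
  "ec_mult a2 a4 a6 0 P = None"
| "ec_mult a2 a4 a6 (Suc n) P = ec_add a2 a4 a6 P (ec_mult a2 a4 a6 n P)"

definition ec_torsion :: "'a::field \<Rightarrow> 'a \<Rightarrow> 'a \<Rightarrow> ('a \<times> 'a) option \<Rightarrow> bool" where
  "ec_torsion a2 a4 a6 P = (\<exists>n>0. ec_mult a2 a4 a6 n P = None)"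

text \<open>The field K = C(lambda, sqrt(1 - c^2 lambda)) is modelled as the rational function
  field C(t) (type complex poly fract), with t = sqrt(1 - c^2 lambda) and
  lambda = (1 - t^2)/c^2.\<close>

definition K_const :: "complex \<Rightarrow> complex poly fract" where
  "K_const a = Fract [:a:] 1"

definition K_sqrt :: "complex poly fract" where
  "K_sqrt = Fract [:0, 1:] 1"

definition K_lambda :: "real \<Rightarrow> complex poly fract" where
  "K_lambda c = (1 - K_sqrt^2) / K_const (complex_of_real (c^2))"

text \<open>Legendre curve Y^2 = X(X-1)(X-lambda) = X^3 - (1+lambda) X^2 + lambda X.\<close>
definition leg_a2 :: "real \<Rightarrow> complex poly fract" where
  "leg_a2 c = - (1 + K_lambda c)"
definition leg_a4 :: "real \<Rightarrow> complex poly fract" where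
  "leg_a4 c = K_lambda c"

definition billiard_B :: "real \<Rightarrow> (complex poly fract \<times> complex poly fract) option" where
  "billiard_B c = (let lam = K_lambda c; cc = K_const (complex_of_real c);
      s = K_const (complex_of_real (sqrt (1 - c^2))); d = 1 - cc^2 * lam in
    Some ((1 - cc^2) * lam / d, cc * s * lam * (1 - lam) / (d * K_sqrt)))"

end

(*
  Expand everything at the place t = 0 of K = C(t), t = sqrt(1 - c^2 lambda), i.e. embed K into
  the Laurent series field C((t)). There the Legendre coefficients are integral, and in the local
  parameter z = x/y, w = 1/y at the point at infinity the billiard point B has ord z = 1 and
  ord w >= 3: B lies in the formal group of the curve. On the formal group the chord-tangent law
  is additive to first order, z(P + Q) = z(P) + z(Q) mod t^3, so the t-coefficient of z(nB) is
  n times that of z(B). In characteristic 0 this is never zero, hence nB is never the point at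
  infinity.
*)

theory Submission
  imports Defs "HOL-Computational_Algebra.Formal_Laurent_Series"
begin

unbundle fps_syntax

section \<open>Field embeddings transport the group law\<close>

locale field_embedding =
  fixes h :: "'a::field \<Rightarrow> 'b::field"
  assumes hom_add: "h (x + y) = h x + h y"
    and hom_mult: "h (x * y) = h x * h y"
    and hom_one: "h 1 = 1"
    and inj_hom: "inj h"
begin

lemma hom_zero: "h 0 = 0"
proof -
  have "h 0 + h 0 = h 0 + 0"
    using hom_add[of 0 0] by simp
  then show ?thesis
    by (simp only: add_left_cancel)
qed

lemma hom_uminus: "h (- x) = - h x"
proof -
  have "h x + h (- x) = 0"
    using hom_add[of x "- x"] by (simp add: hom_zero)
  then show ?thesis
    by (simp add: add.inverse_unique)
qed

lemma hom_diff: "h (x - y) = h x - h y"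
  using hom_add[of x "- y"] by (simp add: hom_uminus)

lemma hom_eq_iff: "h x = h y \<longleftrightarrow> x = y"
  using inj_hom by (rule inj_eq)

lemma hom_inverse: "h (inverse x) = inverse (h x)"
proof (cases "x = 0")
  case False
  then have "h x * h (inverse x) = 1"
    by (simp flip: hom_mult add: hom_one)
  then show ?thesis
    by (simp add: inverse_unique)
qed (simp add: hom_zero)

lemma hom_divide: "h (x / y) = h x / h y"
  by (simp add: divide_inverse hom_mult hom_inverse)

lemma hom_power: "h (x ^ n) = h x ^ n"
  by (induction n) (simp_all add: hom_one hom_mult)

lemma hom_of_nat: "h (of_nat n) = of_nat n"
  by (induction n) (simp_all add: hom_zero hom_one hom_add)

lemma hom_numeral: "h (numeral n) = numeral n"
  using hom_of_nat[of "numeral n"] by simp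

lemmas hom_simps = hom_add hom_mult hom_one hom_zero hom_uminus hom_diff hom_divide
  hom_power hom_numeral hom_eq_iff

abbreviation map_point :: "('a \<times> 'a) option \<Rightarrow> ('b \<times> 'b) option" where
  "map_point \<equiv> map_option (map_prod h h)"

lemma on_curve_map_point:
  "on_curve (h a2) (h a4) (h a6) (map_point P) \<longleftrightarrow> on_curve a2 a4 a6 P"
proof (cases P)
  case (Some p)
  obtain x y where p: "p = (x, y)"
    by fastforce
  have "h y ^ 2 = h x ^ 3 + h a2 * h x ^ 2 + h a4 * h x + h a6 \<longleftrightarrow>
        h (y ^ 2) = h (x ^ 3 + a2 * x ^ 2 + a4 * x + a6)"
    by (simp only: hom_add hom_mult hom_power)
  then show ?thesis
    by (simp add: on_curve_def Some p hom_eq_iff)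
qed (simp add: on_curve_def)

lemma ec_add_map_point:
  "map_point (ec_add a2 a4 a6 P Q) = ec_add (h a2) (h a4) (h a6) (map_point P) (map_point Q)"
proof (cases "P = None \<or> Q = None")
  case False
  then obtain x1 y1 x2 y2 where P: "P = Some (x1, y1)" and Q: "Q = Some (x2, y2)"
    by auto
  have "h y1 + h y2 = 0 \<longleftrightarrow> h (y1 + y2) = h 0"
    by (simp only: hom_add hom_zero)
  also have "\<dots> \<longleftrightarrow> y1 + y2 = 0"
    by (rule hom_eq_iff)
  finally have sum_zero: "h y1 + h y2 = 0 \<longleftrightarrow> y1 + y2 = 0" .
  then have opposite: "h x1 = h x2 \<and> h y1 + h y2 = 0 \<longleftrightarrow> x1 = x2 \<and> y1 + y2 = 0"
    using hom_eq_iff by blast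
  show ?thesis
    unfolding P Q ec_add_def by (simp add: opposite sum_zero Let_def hom_simps)
qed (auto simp: ec_add_def split: option.split)

lemma ec_mult_map_point:
  "map_point (ec_mult a2 a4 a6 n P) = ec_mult (h a2) (h a4) (h a6) n (map_point P)"
  by (induction n) (simp_all add: ec_add_map_point)

lemma ec_torsion_map_point:
  "ec_torsion (h a2) (h a4) (h a6) (map_point P) \<longleftrightarrow> ec_torsion a2 a4 a6 P"
  by (simp add: ec_torsion_def flip: ec_mult_map_point)

end

section \<open>Expansion of rational functions into Laurent series\<close>

definition poly_to_fls :: "'a::field poly \<Rightarrow> 'a fls" where
  "poly_to_fls p = fps_to_fls (fps_of_poly p)"

lemma poly_to_fls_add: "poly_to_fls (p + q) = poly_to_fls p + poly_to_fls q"
  by (simp add: poly_to_fls_def fps_of_poly_add)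

lemma poly_to_fls_mult: "poly_to_fls (p * q) = poly_to_fls p * poly_to_fls q"
  by (simp add: poly_to_fls_def fps_of_poly_mult fls_times_fps_to_fls)

lemma poly_to_fls_eq_iff: "poly_to_fls p = poly_to_fls q \<longleftrightarrow> p = q"
  by (simp add: poly_to_fls_def fps_of_poly_eq_iff)

lemma poly_to_fls_eq_0_iff [simp]: "poly_to_fls p = 0 \<longleftrightarrow> p = 0"
  using poly_to_fls_eq_iff[of p 0] by (simp add: poly_to_fls_def)

lift_definition fract_to_fls :: "'a::field poly fract \<Rightarrow> 'a fls"
  is "\<lambda>(p, q). poly_to_fls p / poly_to_fls q"
proof clarsimp
  fix p q p' q' :: "'a poly"
  assume "q \<noteq> 0" "q' \<noteq> 0" "p * q' = p' * q"
  then show "poly_to_fls p / poly_to_fls q = poly_to_fls p' / poly_to_fls q'"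
    by (simp add: frac_eq_eq flip: poly_to_fls_mult)
qed

lemma fract_to_fls_Fract: "q \<noteq> 0 \<Longrightarrow> fract_to_fls (Fract p q) = poly_to_fls p / poly_to_fls q"
  by transfer simp

lemma fract_to_fls_add: "fract_to_fls (x + y) = fract_to_fls x + fract_to_fls y"
proof (cases x, cases y)
  fix p q p' q' assume x: "x = Fract p q" "q \<noteq> 0" and y: "y = Fract p' q'" "q' \<noteq> 0"
  then have "fract_to_fls (x + y) = poly_to_fls (p * q' + p' * q) / poly_to_fls (q * q')"
    by (simp add: fract_to_fls_Fract)
  also have "\<dots> = fract_to_fls x + fract_to_fls y"
    using x y by (simp add: fract_to_fls_Fract poly_to_fls_add poly_to_fls_mult add_frac_eq)
  finally show ?thesis .
qed

lemma fract_to_fls_mult: "fract_to_fls (x * y) = fract_to_fls x * fract_to_fls y"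
  by (cases x, cases y) (simp add: fract_to_fls_Fract poly_to_fls_mult)

lemma fract_to_fls_one: "fract_to_fls 1 = 1"
  by (simp add: One_fract_def fract_to_fls_Fract poly_to_fls_def)

lemma inj_fract_to_fls: "inj fract_to_fls"
proof (rule injI)
  fix x y :: "'a::field poly fract"
  assume "fract_to_fls x = fract_to_fls y"
  then show "x = y"
    by (cases x, cases y)
      (simp add: fract_to_fls_Fract eq_fract frac_eq_eq poly_to_fls_eq_iff flip: poly_to_fls_mult)
qed

interpretation fract_to_fls: field_embedding fract_to_fls
  by unfold_locales
    (simp_all add: fract_to_fls_add fract_to_fls_mult fract_to_fls_one inj_fract_to_fls)

section \<open>Orders of Laurent series\<close>

definition subdegree_ge :: "'a::field fls \<Rightarrow> int \<Rightarrow> bool" where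
  "subdegree_ge f k \<longleftrightarrow> (\<forall>n<k. f $$ n = 0)"

lemma subdegree_ge_nth: "subdegree_ge f k \<Longrightarrow> n < k \<Longrightarrow> f $$ n = 0"
  by (simp add: subdegree_ge_def)

lemma subdegree_ge_iff: "f \<noteq> 0 \<Longrightarrow> subdegree_ge f k \<longleftrightarrow> k \<le> fls_subdegree f"
  unfolding subdegree_ge_def
  by (metis fls_subdegree_leI linorder_not_le nth_fls_subdegree_nonzero order_less_le_trans)

lemma subdegree_ge_mono: "subdegree_ge f k \<Longrightarrow> m \<le> k \<Longrightarrow> subdegree_ge f m"
  by (simp add: subdegree_ge_def)

lemma subdegree_ge_0 [simp]: "subdegree_ge 0 k"
  and subdegree_ge_1 [simp]: "subdegree_ge 1 0"
  and subdegree_ge_const [simp]: "subdegree_ge (fls_const c) 0"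
  and subdegree_ge_numeral [simp]: "subdegree_ge (numeral m) 0"
  and subdegree_ge_X [simp]: "subdegree_ge fls_X 1"
  and subdegree_ge_uminus_iff [simp]: "subdegree_ge (- f) k \<longleftrightarrow> subdegree_ge f k"
  by (simp_all add: subdegree_ge_def)

lemma subdegree_ge_add: "subdegree_ge f k \<Longrightarrow> subdegree_ge g k \<Longrightarrow> subdegree_ge (f + g) k"
  and subdegree_ge_diff: "subdegree_ge f k \<Longrightarrow> subdegree_ge g k \<Longrightarrow> subdegree_ge (f - g) k"
  by (simp_all add: subdegree_ge_def)

lemma subdegree_ge_mult:
  assumes "subdegree_ge f k" "subdegree_ge g m"
  shows "subdegree_ge (f * g) (k + m)"
proof (cases "f = 0 \<or> g = 0")
  case False
  then have "k \<le> fls_subdegree f" "m \<le> fls_subdegree g"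
    using assms subdegree_ge_iff by auto
  then show ?thesis
    unfolding subdegree_ge_def by (intro allI impI fls_times_nth_eq0) simp
qed auto

lemma subdegree_ge_power: "subdegree_ge f k \<Longrightarrow> subdegree_ge (f ^ n) (int n * k)"
proof (induction n)
  case (Suc n)
  then have "subdegree_ge (f * f ^ n) (k + int n * k)"
    by (intro subdegree_ge_mult)
  then show ?case
    by (simp add: algebra_simps)
qed simp

lemma unit_subdegree:
  assumes "subdegree_ge u 0" "u $$ 0 \<noteq> 0"
  shows "u \<noteq> 0" "fls_subdegree u = 0"
  using assms by (auto intro: fls_subdegree_eqI simp: subdegree_ge_def)

lemma subdegree_ge_divide_unit:
  assumes "subdegree_ge f k" "subdegree_ge u 0" "u $$ 0 \<noteq> 0"
  shows "subdegree_ge (f / u) k"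
proof -
  have "inverse u \<noteq> 0" "fls_subdegree (inverse u) = 0"
    using unit_subdegree[OF assms(2,3)] assms(3) by simp_all
  then have "subdegree_ge (inverse u) 0"
    by (simp add: subdegree_ge_iff)
  from subdegree_ge_mult[OF assms(1) this] show ?thesis
    by (simp add: divide_inverse)
qed

lemma one_plus_subdegree_ge:
  assumes "subdegree_ge e 1"
  shows "subdegree_ge (1 + e) 0" "(1 + e) $$ 0 = 1"
  using assms by (auto intro: subdegree_ge_add subdegree_ge_mono simp: subdegree_ge_def)

section \<open>Chords and tangents\<close>

text \<open>In the coordinates z = x/y, w = 1/y the point at infinity of y^2 = x^3 + a x^2 + b x
  becomes the origin and the curve becomes w = z^3 + a z^2 w + b z w^2.\<close>

lemma curve_zw:
  fixes a b x y :: "'a::field"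
  assumes "y^2 = x^3 + a*x^2 + b*x" "y \<noteq> 0"
  shows "1/y = (x/y)^3 + a*(x/y)^2*(1/y) + b*(x/y)*(1/y)^2"
proof -
  have "(x/y)^3 + a*(x/y)^2*(1/y) + b*(x/y)*(1/y)^2 = (x^3 + a*x^2 + b*x) / y^3"
    using assms(2) by (simp add: field_simps power2_eq_square power3_eq_cube)
  also have "\<dots> = y^2 / y^3"
    using assms(1) by simp
  also have "\<dots> = 1/y"
    using assms(2) by (simp add: power2_eq_square power3_eq_cube)
  finally show ?thesis ..
qed

lemma zw_chord_identity:
  fixes a b z1 z2 w1 w2 :: "'a::comm_ring_1"
  assumes "w1 = z1^3 + a*z1^2*w1 + b*z1*w1^2" "w2 = z2^3 + a*z2^2*w2 + b*z2*w2^2"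
  shows "(w2 - w1) * (1 - a*z1^2 - b*z1*(w1 + w2)) =
         (z2 - z1) * (z1^2 + z1*z2 + z2^2 + a*(z1 + z2)*w2 + b*w2^2)"
proof -
  have "(w2 - w1) * (1 - a*z1^2 - b*z1*(w1 + w2)) -
        (z2 - z1) * (z1^2 + z1*z2 + z2^2 + a*(z1 + z2)*w2 + b*w2^2) =
        (w2 - (z2^3 + a*z2^2*w2 + b*z2*w2^2)) - (w1 - (z1^3 + a*z1^2*w1 + b*z1*w1^2))"
    by (simp add: algebra_simps power2_eq_square power3_eq_cube)
  with assms show ?thesis
    by simp
qed

lemma line_zw:
  fixes l \<beta> x y :: "'a::field"
  assumes "y = l*x + \<beta>" "y \<noteq> 0" "\<beta> \<noteq> 0"
  shows "1/y = (-l/\<beta>) * (x/y) + 1/\<beta>"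
proof -
  have "(-l/\<beta>) * (x/y) + 1/\<beta> = (y - l*x) / (\<beta>*y)"
    using assms(2,3) by (simp add: field_simps)
  also have "\<dots> = 1/y"
    using assms by simp
  finally show ?thesis ..
qed

lemma chord_vieta:
  fixes a b l \<beta> x1 y1 x2 y2 x3 :: "'a::field"
  assumes "y1^2 = x1^3 + a*x1^2 + b*x1" "y2^2 = x2^3 + a*x2^2 + b*x2"
    and "y1 = l*x1 + \<beta>" "y2 = l*x2 + \<beta>" "x3 = l^2 - a - x1 - x2" "x1 \<noteq> x2"
  shows "x1*x2 + x1*x3 + x2*x3 = b - 2*l*\<beta>" "x1*x2*x3 = \<beta>^2"
proof -
  have root1: "x1^3 + (a - l^2)*x1^2 + (b - 2*l*\<beta>)*x1 - \<beta>^2 = 0"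
    using assms(1,3) by algebra
  have root2: "x2^3 + (a - l^2)*x2^2 + (b - 2*l*\<beta>)*x2 - \<beta>^2 = 0"
    using assms(2,4) by algebra
  have "(x1 - x2) * (x1^2 + x1*x2 + x2^2 + (a - l^2)*(x1 + x2) + (b - 2*l*\<beta>)) = 0"
    using root1 root2 by algebra
  then have "x1^2 + x1*x2 + x2^2 + (a - l^2)*(x1 + x2) + (b - 2*l*\<beta>) = 0"
    using assms(6) by simp
  then show vieta2: "x1*x2 + x1*x3 + x2*x3 = b - 2*l*\<beta>"
    using assms(5) by algebra
  show "x1*x2*x3 = \<beta>^2"
    using root1 vieta2 assms(5) by algebra
qed

lemma tangent_vieta:
  fixes a b l \<beta> x1 y1 x3 :: "'a::field"
  assumes "y1^2 = x1^3 + a*x1^2 + b*x1" "2*l*y1 = 3*x1^2 + 2*a*x1 + b"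
    and "y1 = l*x1 + \<beta>" "x3 = l^2 - a - x1 - x1"
  shows "x1*x1 + x1*x3 + x1*x3 = b - 2*l*\<beta>" "x1*x1*x3 = \<beta>^2"
  using assms by algebra+

lemma tangent_slope_zw:
  fixes a b l \<beta> x y :: "'a::field"
  assumes "y^2 = x^3 + a*x^2 + b*x" "2*l*y = 3*x^2 + 2*a*x + b" "y = l*x + \<beta>"
    and "y \<noteq> 0" "\<beta> \<noteq> 0"
  shows "(-l/\<beta>) * (1 - a*(x/y)^2 - b*(x/y)*(1/y + 1/y)) =
         (x/y)^2 + (x/y)*(x/y) + (x/y)^2 + a*(x/y + x/y)*(1/y) + b*(1/y)^2"
proof -
  have "\<beta> = y - l*x"
    using assms(3) by simp
  then have implicit: "-l * (y^3 - a*x^2*y - 2*b*x*y) = \<beta> * (3*x^2*y + 2*a*x*y + b*y)"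
    using assms(1,2) by algebra
  have "(-l/\<beta>) * (1 - a*(x/y)^2 - b*(x/y)*(1/y + 1/y)) =
        (-l * (y^3 - a*x^2*y - 2*b*x*y)) / (\<beta> * y^3)"
    using assms(4,5) by (simp add: field_simps power2_eq_square power3_eq_cube)
  also have "\<dots> = (x/y)^2 + (x/y)*(x/y) + (x/y)^2 + a*(x/y + x/y)*(1/y) + b*(1/y)^2"
    unfolding implicit using assms(4,5) by (simp add: field_simps power2_eq_square power3_eq_cube)
  finally show ?thesis .
qed

lemma secant_slope_zw:
  fixes a b l \<beta> x1 y1 x2 y2 :: "'a::field"
  assumes curve1: "y1^2 = x1^3 + a*x1^2 + b*x1" and curve2: "y2^2 = x2^3 + a*x2^2 + b*x2"
    and line1: "y1 = l*x1 + \<beta>" and line2: "y2 = l*x2 + \<beta>"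
    and y: "y1 \<noteq> 0" "y2 \<noteq> 0" and \<beta>: "\<beta> \<noteq> 0" and z: "x1/y1 \<noteq> x2/y2"
  shows "(-l/\<beta>) * (1 - a*(x1/y1)^2 - b*(x1/y1)*(1/y1 + 1/y2)) =
         (x1/y1)^2 + (x1/y1)*(x2/y2) + (x2/y2)^2 + a*(x1/y1 + x2/y2)*(1/y2) + b*(1/y2)^2"
proof -
  have "1/y2 - 1/y1 = (-l/\<beta>) * (x2/y2 - x1/y1)"
    using line_zw[OF line1 y(1) \<beta>] line_zw[OF line2 y(2) \<beta>] by (simp add: algebra_simps)
  then have "(x2/y2 - x1/y1) * ((-l/\<beta>) * (1 - a*(x1/y1)^2 - b*(x1/y1)*(1/y1 + 1/y2))) =
      (x2/y2 - x1/y1) *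
      ((x1/y1)^2 + (x1/y1)*(x2/y2) + (x2/y2)^2 + a*(x1/y1 + x2/y2)*(1/y2) + b*(1/y2)^2)"
    using zw_chord_identity[OF curve_zw[OF curve1 y(1)] curve_zw[OF curve2 y(2)]]
    by (simp only: mult.assoc mult.left_commute)
  moreover have "x2/y2 - x1/y1 \<noteq> 0"
    using z by simp
  ultimately show ?thesis
    by (rule mult_left_cancel[THEN iffD1, rotated])
qed

lemma third_intersection_on_curve:
  fixes a b l \<beta> x1 x2 x3 :: "'a::field"
  assumes "x3 = l^2 - a - x1 - x2"
    and "x1*x2 + x1*x3 + x2*x3 = b - 2*l*\<beta>" "x1*x2*x3 = \<beta>^2"
  shows "(l*x3 + \<beta>)^2 = x3^3 + a*x3^2 + b*x3"
  using assms by algebra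

text \<open>When y_i = l x_i + \<beta>, the left-hand side is z(P1) + z(P2) - z(P1 + P2).\<close>

lemma third_intersection_z_sum:
  fixes a b l \<beta> \<mu> x1 x2 x3 :: "'a::field"
  assumes x3: "x3 = l^2 - a - x1 - x2"
    and vieta2: "x1*x2 + x1*x3 + x2*x3 = b - 2*l*\<beta>" and vieta3: "x1*x2*x3 = \<beta>^2"
    and \<beta>: "\<beta> \<noteq> 0" and \<mu>: "\<mu> = -l/\<beta>"
    and T1: "l*x1 + \<beta> \<noteq> 0" and T2: "l*x2 + \<beta> \<noteq> 0" and unit: "1 + a*\<mu> + b*\<mu>^2 \<noteq> 0"
  shows "l*x3 + \<beta> \<noteq> 0"
    and "x1/(l*x1 + \<beta>) + x2/(l*x2 + \<beta>) + x3/(l*x3 + \<beta>) =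
         -(a + 2*b*\<mu>) / (\<beta> * (1 + a*\<mu> + b*\<mu>^2))"
proof -
  define T1 T2 T3 where "T1 = l*x1 + \<beta>" and "T2 = l*x2 + \<beta>" and "T3 = l*x3 + \<beta>"
  have vieta1: "x1 + x2 + x3 = l^2 - a"
    using x3 by simp
  have l: "l = -\<mu>*\<beta>"
    using \<mu> \<beta> by simp
  have "T1*T2*T3 = l^3*(x1*x2*x3) + l^2*\<beta>*(x1*x2 + x1*x3 + x2*x3) + l*\<beta>^2*(x1 + x2 + x3) + \<beta>^3"
    unfolding T1_def T2_def T3_def by (simp add: algebra_simps power2_eq_square power3_eq_cube)
  also have "\<dots> = \<beta>^3 * (1 + a*\<mu> + b*\<mu>^2)"
    unfolding vieta1 vieta2 vieta3 l by (simp add: algebra_simps power2_eq_square power3_eq_cube)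
  finally have prod: "T1*T2*T3 = \<beta>^3 * (1 + a*\<mu> + b*\<mu>^2)" .
  then show T3: "l*x3 + \<beta> \<noteq> 0"
    using \<beta> unit T3_def by auto
  have "x1*T2*T3 + x2*T1*T3 + x3*T1*T2 =
        3*l^2*(x1*x2*x3) + 2*l*\<beta>*(x1*x2 + x1*x3 + x2*x3) + \<beta>^2*(x1 + x2 + x3)"
    unfolding T1_def T2_def T3_def by (simp add: algebra_simps power2_eq_square power3_eq_cube)
  also have "\<dots> = \<beta>^2 * (-(a + 2*b*\<mu>))"
    unfolding vieta1 vieta2 vieta3 l by (simp add: algebra_simps power2_eq_square power3_eq_cube)
  finally have sum: "x1*T2*T3 + x2*T1*T3 + x3*T1*T2 = \<beta>^2 * (-(a + 2*b*\<mu>))" .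
  have "x1/T1 + x2/T2 + x3/T3 = (x1*T2*T3 + x2*T1*T3 + x3*T1*T2) / (T1*T2*T3)"
    using T1 T2 T3 unfolding T1_def[symmetric] T2_def[symmetric] T3_def[symmetric]
    by (simp add: field_simps)
  also have "\<dots> = (\<beta>^2 * (-(a + 2*b*\<mu>))) / (\<beta>^2 * (\<beta> * (1 + a*\<mu> + b*\<mu>^2)))"
    unfolding sum prod by (simp add: power2_eq_square power3_eq_cube mult.assoc)
  also have "\<dots> = -(a + 2*b*\<mu>) / (\<beta> * (1 + a*\<mu> + b*\<mu>^2))"
    using \<beta> by simp
  finally show "x1/(l*x1 + \<beta>) + x2/(l*x2 + \<beta>) + x3/(l*x3 + \<beta>) =
      -(a + 2*b*\<mu>) / (\<beta> * (1 + a*\<mu> + b*\<mu>^2))"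
    unfolding T1_def T2_def T3_def .
qed

section \<open>The formal group\<close>

text \<open>Affine points reducing to the point at infinity at t = 0.\<close>

definition formal_group_point :: "'a::field fls \<Rightarrow> 'a fls \<Rightarrow> 'a fls \<Rightarrow> 'a fls \<Rightarrow> bool" where
  "formal_group_point a b x y \<longleftrightarrow> y \<noteq> 0 \<and> y^2 = x^3 + a*x^2 + b*x \<and>
     subdegree_ge (x/y) 1 \<and> subdegree_ge (1/y) 3"

lemma chord_factor_unit:
  fixes a b z1 w1 w2 :: "'a::field fls"
  assumes "subdegree_ge a 0" "subdegree_ge b 0" "subdegree_ge z1 1"
    and "subdegree_ge w1 3" "subdegree_ge w2 3"
  shows "subdegree_ge (1 - a*z1^2 - b*z1*(w1 + w2)) 0" "(1 - a*z1^2 - b*z1*(w1 + w2)) $$ 0 = 1"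
proof -
  have "subdegree_ge (a*z1^2) (0 + int 2 * 1)" "subdegree_ge (b*z1*(w1 + w2)) (0 + 1 + 3)"
    using assms by (intro subdegree_ge_mult subdegree_ge_power subdegree_ge_add; simp)+
  then have "subdegree_ge (a*z1^2) 1" "subdegree_ge (b*z1*(w1 + w2)) 1"
    by (auto elim: subdegree_ge_mono)
  then have "subdegree_ge (-(a*z1^2 + b*z1*(w1 + w2))) 1"
    by (simp only: subdegree_ge_uminus_iff subdegree_ge_add)
  moreover have "1 - a*z1^2 - b*z1*(w1 + w2) = 1 + -(a*z1^2 + b*z1*(w1 + w2))"
    by (simp add: algebra_simps)
  ultimately show "subdegree_ge (1 - a*z1^2 - b*z1*(w1 + w2)) 0"
    and "(1 - a*z1^2 - b*z1*(w1 + w2)) $$ 0 = 1"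
    by (simp_all only: one_plus_subdegree_ge)
qed

lemma formal_slope_subdegree:
  fixes a b z1 w1 z2 w2 \<mu> :: "'a::field fls"
  assumes a: "subdegree_ge a 0" and b: "subdegree_ge b 0"
    and z: "subdegree_ge z1 1" "subdegree_ge z2 1" and w: "subdegree_ge w1 3" "subdegree_ge w2 3"
    and slope: "\<mu> * (1 - a*z1^2 - b*z1*(w1 + w2)) =
      z1^2 + z1*z2 + z2^2 + a*(z1 + z2)*w2 + b*w2^2"
  shows "subdegree_ge \<mu> 2"
proof -
  note unit = chord_factor_unit[OF a b z(1) w]
  have "subdegree_ge (z1^2) (int 2 * 1)" "subdegree_ge (z2^2) (int 2 * 1)"
    "subdegree_ge (z1*z2) (1 + 1)" "subdegree_ge (a*(z1 + z2)*w2) (0 + 1 + 3)"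
    "subdegree_ge (b*w2^2) (0 + int 2 * 3)"
    using a b z w by (intro subdegree_ge_mult subdegree_ge_power subdegree_ge_add; simp)+
  then have "subdegree_ge (z1^2 + z1*z2 + z2^2 + a*(z1 + z2)*w2 + b*w2^2) 2"
    by (intro subdegree_ge_add) (auto elim: subdegree_ge_mono)
  moreover have "\<mu> = (z1^2 + z1*z2 + z2^2 + a*(z1 + z2)*w2 + b*w2^2) /
      (1 - a*z1^2 - b*z1*(w1 + w2))"
    using slope unit_subdegree(1)[OF unit(1)] unit(2)
    by (metis nonzero_mult_div_cancel_right one_neq_zero)
  ultimately show ?thesis
    by (metis subdegree_ge_divide_unit unit one_neq_zero)
qed

lemma formal_group_point_zw:
  assumes "formal_group_point a b x y"
  shows "1/y = (x/y)^3 + a*(x/y)^2*(1/y) + b*(x/y)*(1/y)^2"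
  using assms curve_zw unfolding formal_group_point_def by blast

lemma formal_group_point_z_inj:
  assumes a: "subdegree_ge a 0" and b: "subdegree_ge b 0"
    and P1: "formal_group_point a b x1 y1" and P2: "formal_group_point a b x2 y2"
    and z: "x1/y1 = x2/y2"
  shows "x1 = x2 \<and> y1 = y2"
proof -
  have y: "y1 \<noteq> 0" "y2 \<noteq> 0" and z1: "subdegree_ge (x1/y1) 1"
    and w: "subdegree_ge (1/y1) 3" "subdegree_ge (1/y2) 3"
    using P1 P2 by (simp_all add: formal_group_point_def)
  note unit = chord_factor_unit[OF a b z1 w]
  have "(1/y2 - 1/y1) * (1 - a*(x1/y1)^2 - b*(x1/y1)*(1/y1 + 1/y2)) = 0"
    using zw_chord_identity[OF formal_group_point_zw[OF P1] formal_group_point_zw[OF P2]] z by simp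
  moreover have "1 - a*(x1/y1)^2 - b*(x1/y1)*(1/y1 + 1/y2) \<noteq> 0"
    by (metis unit_subdegree(1) unit one_neq_zero)
  ultimately have "y1 = y2"
    using y by simp
  with z y show ?thesis
    by simp
qed

lemma formal_group_point_subdegree:
  assumes a: "subdegree_ge a 0" and b: "subdegree_ge b 0" and P: "formal_group_point a b x y"
    and x: "x \<noteq> 0"
  shows "fls_subdegree (1/y) = 3 * fls_subdegree (x/y)"
proof -
  define z w where "z = x/y" and "w = 1/y"
  have z: "subdegree_ge z 1" and w: "subdegree_ge w 3" and "w \<noteq> 0"
    using P by (simp_all add: formal_group_point_def z_def w_def)
  have "w = z^3 + a*z^2*w + b*z*w^2"
    using formal_group_point_zw[OF P] by (simp add: z_def w_def)
  then have cube: "z^3 = w * (1 - a*z^2 - b*z*(w + 0))"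
    by (simp add: algebra_simps power2_eq_square)
  note unit = chord_factor_unit[OF a b z w subdegree_ge_0]
  have "(1 - a*z^2 - b*z*(w + 0)) $$ 0 \<noteq> 0"
    using unit(2) by (metis one_neq_zero)
  then have "1 - a*z^2 - b*z*(w + 0) \<noteq> 0" "fls_subdegree (1 - a*z^2 - b*z*(w + 0)) = 0"
    using unit_subdegree[OF unit(1)] by blast+
  with cube \<open>w \<noteq> 0\<close> show ?thesis
    unfolding z_def[symmetric] w_def[symmetric]
    by (metis fls_subdegree_mult fls_subdegree_pow add.right_neutral of_nat_numeral)
qed

lemma formal_tangent_not_through_origin:
  assumes a: "subdegree_ge a 0" and b: "subdegree_ge b 0" and P: "formal_group_point a b x y"
    and tangent: "2*l*y = 3*x^2 + 2*a*x + b"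
  shows "y \<noteq> l*x"
proof
  assume line: "y = l*x"
  define z w where "z = x/y" and "w = 1/y"
  have y: "y \<noteq> 0" and curve: "y^2 = x^3 + a*x^2 + b*x" and z1: "subdegree_ge z 1"
    using P by (simp_all add: formal_group_point_def z_def)
  have x: "x \<noteq> 0"
    using line y by auto
  have "x * (x^2 - b) = 0"
    using curve tangent line by algebra
  then have zb: "z^2 = b * w^2"
    using x unfolding z_def w_def by (simp add: field_simps)
  have "z \<noteq> 0" "w \<noteq> 0"
    using x y by (simp_all add: z_def w_def)
  with zb have b0: "b \<noteq> 0"
    by auto
  have "fls_subdegree (z^2) = fls_subdegree (b * w^2)"
    by (simp only: zb)
  then have "2 * fls_subdegree z = fls_subdegree b + 2 * fls_subdegree w"
    using b0 \<open>w \<noteq> 0\<close> by (simp add: fls_subdegree_pow)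
  moreover have "fls_subdegree w = 3 * fls_subdegree z"
    unfolding z_def w_def by (rule formal_group_point_subdegree[OF a b P x])
  moreover have "1 \<le> fls_subdegree z" "0 \<le> fls_subdegree b"
    using z1 b \<open>z \<noteq> 0\<close> b0 by (simp_all add: subdegree_ge_iff)
  ultimately show False
    by linarith
qed

lemma formal_chord_subdegree:
  assumes a: "subdegree_ge a 0" and b: "subdegree_ge b 0"
    and P1: "formal_group_point a b x1 y1" and P2: "formal_group_point a b x2 y2"
    and line1: "y1 = l*x1 + \<beta>" and \<beta>: "\<beta> \<noteq> 0"
    and slope: "(-l/\<beta>) * (1 - a*(x1/y1)^2 - b*(x1/y1)*(1/y1 + 1/y2)) =
      (x1/y1)^2 + (x1/y1)*(x2/y2) + (x2/y2)^2 + a*(x1/y1 + x2/y2)*(1/y2) + b*(1/y2)^2"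
  shows "subdegree_ge (-l/\<beta>) 2" "subdegree_ge (1/\<beta>) 3"
proof -
  have y1: "y1 \<noteq> 0" and z: "subdegree_ge (x1/y1) 1" "subdegree_ge (x2/y2) 1"
    and w: "subdegree_ge (1/y1) 3" "subdegree_ge (1/y2) 3"
    using P1 P2 by (simp_all add: formal_group_point_def)
  show \<mu>: "subdegree_ge (-l/\<beta>) 2"
    by (rule formal_slope_subdegree[OF a b z w slope])
  have "1/\<beta> = 1/y1 - (-l/\<beta>) * (x1/y1)"
    using line_zw[OF line1 y1 \<beta>] by simp
  moreover have "subdegree_ge ((-l/\<beta>) * (x1/y1)) 3"
    using subdegree_ge_mult[OF \<mu> z(1)] by simp
  ultimately show "subdegree_ge (1/\<beta>) 3"
    using w(1) by (metis subdegree_ge_diff)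
qed

lemma formal_chord_z_sum:
  assumes a: "subdegree_ge a 0" and b: "subdegree_ge b 0"
    and P1: "formal_group_point a b x1 y1" and P2: "formal_group_point a b x2 y2"
    and line1: "y1 = l*x1 + \<beta>" and line2: "y2 = l*x2 + \<beta>" and \<beta>: "\<beta> \<noteq> 0"
    and x3: "x3 = l^2 - a - x1 - x2"
    and vieta2: "x1*x2 + x1*x3 + x2*x3 = b - 2*l*\<beta>" and vieta3: "x1*x2*x3 = \<beta>^2"
    and slope: "(-l/\<beta>) * (1 - a*(x1/y1)^2 - b*(x1/y1)*(1/y1 + 1/y2)) =
      (x1/y1)^2 + (x1/y1)*(x2/y2) + (x2/y2)^2 + a*(x1/y1 + x2/y2)*(1/y2) + b*(1/y2)^2"
  shows "l*x3 + \<beta> \<noteq> 0" "subdegree_ge (x1/y1 + x2/y2 + x3/(l*x3 + \<beta>)) 3"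
proof -
  define \<mu> where "\<mu> = -l/\<beta>"
  have y: "y1 \<noteq> 0" "y2 \<noteq> 0"
    using P1 P2 by (simp_all add: formal_group_point_def)
  note line_subdegree = formal_chord_subdegree[OF a b P1 P2 line1 \<beta> slope, folded \<mu>_def]
  have "subdegree_ge (a*\<mu>) (0 + 2)" "subdegree_ge (b*\<mu>^2) (0 + int 2 * 2)"
    using a b line_subdegree(1) by (intro subdegree_ge_mult subdegree_ge_power; simp)+
  then have "subdegree_ge (a*\<mu> + b*\<mu>^2) 1"
    by (intro subdegree_ge_add) (auto elim: subdegree_ge_mono)
  from one_plus_subdegree_ge[OF this] have unit: "subdegree_ge (1 + a*\<mu> + b*\<mu>^2) 0"
    "(1 + a*\<mu> + b*\<mu>^2) $$ 0 \<noteq> 0"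
    by (simp_all add: add.assoc)
  then have "1 + a*\<mu> + b*\<mu>^2 \<noteq> 0"
    by (metis fls_zero_nth)
  note third = third_intersection_z_sum[OF x3 vieta2 vieta3 \<beta> \<mu>_def _ _ this,
      folded line1 line2, OF y]
  show "l*x3 + \<beta> \<noteq> 0"
    by (rule third(1))
  have "subdegree_ge (2*b*\<mu>) (0 + 0 + 2)"
    using b line_subdegree(1) by (intro subdegree_ge_mult) simp_all
  then have "subdegree_ge (2*b*\<mu>) 0"
    by (rule subdegree_ge_mono) simp
  then have "subdegree_ge (-(a + 2*b*\<mu>)) 0"
    using a by (simp only: subdegree_ge_uminus_iff subdegree_ge_add)
  then have "subdegree_ge (-(a + 2*b*\<mu>) * (1/\<beta>)) 3"
    using subdegree_ge_mult[OF _ line_subdegree(2)] by fastforce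
  then have "subdegree_ge (-(a + 2*b*\<mu>) * (1/\<beta>) / (1 + a*\<mu> + b*\<mu>^2)) 3"
    by (rule subdegree_ge_divide_unit[OF _ unit])
  moreover have "x1/y1 + x2/y2 + x3/(l*x3 + \<beta>) = -(a + 2*b*\<mu>) * (1/\<beta>) / (1 + a*\<mu> + b*\<mu>^2)"
    using third(2) by simp
  ultimately show "subdegree_ge (x1/y1 + x2/y2 + x3/(l*x3 + \<beta>)) 3"
    by simp
qed

lemma formal_chord:
  assumes a: "subdegree_ge a 0" and b: "subdegree_ge b 0"
    and P1: "formal_group_point a b x1 y1" and P2: "formal_group_point a b x2 y2"
    and line1: "y1 = l*x1 + \<beta>" and line2: "y2 = l*x2 + \<beta>" and \<beta>: "\<beta> \<noteq> 0"
    and x3: "x3 = l^2 - a - x1 - x2"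
    and vieta2: "x1*x2 + x1*x3 + x2*x3 = b - 2*l*\<beta>" and vieta3: "x1*x2*x3 = \<beta>^2"
    and slope: "(-l/\<beta>) * (1 - a*(x1/y1)^2 - b*(x1/y1)*(1/y1 + 1/y2)) =
      (x1/y1)^2 + (x1/y1)*(x2/y2) + (x2/y2)^2 + a*(x1/y1 + x2/y2)*(1/y2) + b*(1/y2)^2"
  shows "formal_group_point a b x3 (-(l*x3 + \<beta>)) \<and>
    subdegree_ge (x3/(-(l*x3 + \<beta>)) - x1/y1 - x2/y2) 3"
proof -
  define T3 where "T3 = l*x3 + \<beta>"
  have z: "subdegree_ge (x1/y1) 1" "subdegree_ge (x2/y2) 1"
    using P1 P2 by (simp_all add: formal_group_point_def)
  note line_subdegree = formal_chord_subdegree[OF a b P1 P2 line1 \<beta> slope]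
  note z_sum = formal_chord_z_sum[OF assms, folded T3_def]
  have "x3/(-T3) - x1/y1 - x2/y2 = -(x1/y1 + x2/y2 + x3/T3)"
    by (simp add: algebra_simps)
  then have z_diff: "subdegree_ge (x3/(-T3) - x1/y1 - x2/y2) 3"
    using z_sum(2) by (simp only: subdegree_ge_uminus_iff)
  then have "subdegree_ge (x3/(-T3) - x1/y1 - x2/y2) 1"
    by (rule subdegree_ge_mono) simp
  then have "subdegree_ge ((x3/(-T3) - x1/y1 - x2/y2) + x1/y1 + x2/y2) 1"
    using z by (intro subdegree_ge_add)
  then have z3: "subdegree_ge (x3/(-T3)) 1"
    by simp
  have "1/T3 = (-l/\<beta>) * (x3/T3) + 1/\<beta>"
    using line_zw[OF T3_def z_sum(1) \<beta>] .
  moreover have "subdegree_ge ((-l/\<beta>) * (x3/T3)) 3"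
    using subdegree_ge_mult[OF line_subdegree(1), of "x3/T3" 1] z3 by simp
  ultimately have "subdegree_ge (1/T3) 3"
    using line_subdegree(2) by (metis subdegree_ge_add)
  then have "subdegree_ge (1/(-T3)) 3"
    by simp
  moreover have "(-T3)^2 = x3^3 + a*x3^2 + b*x3"
    using third_intersection_on_curve[OF x3 vieta2 vieta3] by (simp only: T3_def power2_minus)
  moreover have "-T3 \<noteq> 0"
    using z_sum(1) by (simp only: neg_equal_0_iff_equal not_False_eq_True)
  ultimately show ?thesis
    using z3 z_diff unfolding formal_group_point_def T3_def[symmetric] by blast
qed

lemma ec_add_formal_distinct:
  assumes a: "subdegree_ge a 0" and b: "subdegree_ge b 0"
    and P1: "formal_group_point a b x1 y1" and P2: "formal_group_point a b x2 y2"
    and x: "x1 \<noteq> x2"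
  shows "\<exists>x3 y3. ec_add a b 0 (Some (x1, y1)) (Some (x2, y2)) = Some (x3, y3) \<and>
    formal_group_point a b x3 y3 \<and> subdegree_ge (x3/y3 - x1/y1 - x2/y2) 3"
proof -
  define l where "l = (y2 - y1) / (x2 - x1)"
  define \<beta> where "\<beta> = y1 - l*x1"
  define x3 where "x3 = l^2 - a - x1 - x2"
  have "ec_add a b 0 (Some (x1, y1)) (Some (x2, y2)) = Some (x3, -(y1 + l*(x3 - x1)))"
    using x by (simp add: ec_add_def Let_def l_def x3_def)
  also have "-(y1 + l*(x3 - x1)) = -(l*x3 + \<beta>)"
    by (simp add: \<beta>_def algebra_simps)
  finally have ec: "ec_add a b 0 (Some (x1, y1)) (Some (x2, y2)) = Some (x3, -(l*x3 + \<beta>))" .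
  have line1: "y1 = l*x1 + \<beta>"
    by (simp add: \<beta>_def)
  have "l*x2 + \<beta> = y1 + l*(x2 - x1)"
    by (simp add: \<beta>_def algebra_simps)
  also have "\<dots> = y2"
    using x by (simp add: l_def)
  finally have line2: "y2 = l*x2 + \<beta>" ..
  have curve: "y1^2 = x1^3 + a*x1^2 + b*x1" "y2^2 = x2^3 + a*x2^2 + b*x2"
    and y: "y1 \<noteq> 0" "y2 \<noteq> 0"
    using P1 P2 by (simp_all add: formal_group_point_def)
  have z: "x1/y1 \<noteq> x2/y2"
    using formal_group_point_z_inj[OF a b P1 P2] x by blast
  have \<beta>: "\<beta> \<noteq> 0"
  proof
    assume "\<beta> = 0"
    with line1 line2 y have "x1/y1 = x2/y2"
      by (simp add: field_simps)
    with z show False ..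
  qed
  note vieta = chord_vieta[OF curve line1 line2 x3_def x]
  note slope = secant_slope_zw[OF curve line1 line2 y \<beta> z]
  show ?thesis
    using formal_chord[OF a b P1 P2 line1 line2 \<beta> x3_def vieta slope] ec
    by blast
qed

lemma ec_double_formal:
  assumes a: "subdegree_ge a 0" and b: "subdegree_ge b 0"
    and P: "formal_group_point a b x1 y1" and y: "y1 + y1 \<noteq> 0"
  shows "\<exists>x3 y3. ec_add a b 0 (Some (x1, y1)) (Some (x1, y1)) = Some (x3, y3) \<and>
    formal_group_point a b x3 y3 \<and> subdegree_ge (x3/y3 - x1/y1 - x1/y1) 3"
proof -
  define l where "l = (3*x1^2 + 2*a*x1 + b) / (2*y1)"
  define \<beta> where "\<beta> = y1 - l*x1"
  define x3 where "x3 = l^2 - a - x1 - x1"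
  have "ec_add a b 0 (Some (x1, y1)) (Some (x1, y1)) = Some (x3, -(y1 + l*(x3 - x1)))"
    using y by (simp add: ec_add_def Let_def l_def x3_def)
  also have "-(y1 + l*(x3 - x1)) = -(l*x3 + \<beta>)"
    by (simp add: \<beta>_def algebra_simps)
  finally have ec: "ec_add a b 0 (Some (x1, y1)) (Some (x1, y1)) = Some (x3, -(l*x3 + \<beta>))" .
  have "2*y1 \<noteq> 0"
    using y by (metis mult_2)
  then have tangent: "2*l*y1 = 3*x1^2 + 2*a*x1 + b"
    by (simp add: l_def)
  have line: "y1 = l*x1 + \<beta>"
    by (simp add: \<beta>_def)
  have curve: "y1^2 = x1^3 + a*x1^2 + b*x1" and "y1 \<noteq> 0"
    using P by (simp_all add: formal_group_point_def)
  have \<beta>: "\<beta> \<noteq> 0"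
    using formal_tangent_not_through_origin[OF a b P tangent] by (simp add: \<beta>_def)
  note vieta = tangent_vieta[OF curve tangent line x3_def]
  note slope = tangent_slope_zw[OF curve tangent line \<open>y1 \<noteq> 0\<close> \<beta>]
  show ?thesis
    using formal_chord[OF a b P P line line \<beta> x3_def vieta slope] ec
    by blast
qed

lemma ec_add_formal_group_point:
  assumes a: "subdegree_ge a 0" and b: "subdegree_ge b 0"
    and P1: "formal_group_point a b x1 y1" and P2: "formal_group_point a b x2 y2"
  shows "case ec_add a b 0 (Some (x1, y1)) (Some (x2, y2)) of
      None \<Rightarrow> x1/y1 + x2/y2 = 0
    | Some (x3, y3) \<Rightarrow> formal_group_point a b x3 y3 \<and> subdegree_ge (x3/y3 - x1/y1 - x2/y2) 3"
proof (cases "x1 = x2")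
  case True
  show ?thesis
  proof (cases "y1 + y2 = 0")
    case True
    then have "x1/y1 + x2/y2 = 0"
      using \<open>x1 = x2\<close>
      by (simp add: eq_neg_iff_add_eq_0[symmetric] flip: add_divide_distrib minus_divide_right)
    with True \<open>x1 = x2\<close> show ?thesis
      by (simp add: ec_add_def)
  next
    case False
    have "(y1 - y2) * (y1 + y2) = 0"
      using P1 P2 \<open>x1 = x2\<close> unfolding formal_group_point_def by algebra
    with False have "y2 = y1"
      by simp
    with ec_double_formal[OF a b P1] False \<open>x1 = x2\<close> show ?thesis
      by auto
  qed
qed (use ec_add_formal_distinct[OF assms] in auto)

lemma ec_mult_formal_group_point:
  fixes a b x0 y0 :: "'a::field_char_0 fls"
  assumes a: "subdegree_ge a 0" and b: "subdegree_ge b 0"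
    and P0: "formal_group_point a b x0 y0" and z0: "(x0/y0) $$ 1 \<noteq> 0"
  shows "\<exists>x y. ec_mult a b 0 (Suc n) (Some (x0, y0)) = Some (x, y) \<and>
    formal_group_point a b x y \<and> (x/y) $$ 1 = of_nat (Suc n) * (x0/y0) $$ 1"
proof (induction n)
  case 0
  then show ?case
    using P0 by (simp add: ec_add_def)
next
  case (Suc n)
  then obtain x y where nP: "ec_mult a b 0 (Suc n) (Some (x0, y0)) = Some (x, y)"
    and P: "formal_group_point a b x y" and z: "(x/y) $$ 1 = of_nat (Suc n) * (x0/y0) $$ 1"
    by blast
  have sum: "case ec_add a b 0 (Some (x0, y0)) (Some (x, y)) of
      None \<Rightarrow> x0/y0 + x/y = 0
    | Some (x3, y3) \<Rightarrow> formal_group_point a b x3 y3 \<and> subdegree_ge (x3/y3 - x0/y0 - x/y) 3"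
    by (rule ec_add_formal_group_point[OF a b P0 P])
  show ?case
  proof (cases "ec_add a b 0 (Some (x0, y0)) (Some (x, y))")
    case None
    with sum have "(x0/y0 + x/y) $$ 1 = 0"
      by simp
    with z have "of_nat (Suc (Suc n)) * (x0/y0) $$ 1 = 0"
      by (simp add: algebra_simps)
    with z0 show ?thesis
      by (simp only: mult_eq_0_iff of_nat_eq_0_iff) simp
  next
    case (Some P3)
    then obtain x3 y3 where P3: "ec_add a b 0 (Some (x0, y0)) (Some (x, y)) = Some (x3, y3)"
      by (cases P3) auto
    with sum have "formal_group_point a b x3 y3" and "subdegree_ge (x3/y3 - x0/y0 - x/y) 3"
      by simp_all
    moreover from this(2) have "(x3/y3) $$ 1 = of_nat (Suc (Suc n)) * (x0/y0) $$ 1"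
      using z subdegree_ge_nth[of "x3/y3 - x0/y0 - x/y" 3 1] by (simp add: algebra_simps)
    ultimately show ?thesis
      using nP P3 by simp
  qed
qed

lemma formal_group_point_not_torsion:
  fixes a b x0 y0 :: "'a::field_char_0 fls"
  assumes "subdegree_ge a 0" "subdegree_ge b 0"
    and "formal_group_point a b x0 y0" "(x0/y0) $$ 1 \<noteq> 0"
  shows "\<not> ec_torsion a b 0 (Some (x0, y0))"
proof
  assume "ec_torsion a b 0 (Some (x0, y0))"
  then obtain m where "ec_mult a b 0 (Suc m) (Some (x0, y0)) = None"
    unfolding ec_torsion_def by (metis gr0_implies_Suc)
  with ec_mult_formal_group_point[OF assms, of m] show False
    by auto
qed

section \<open>The billiard section\<close>

text \<open>Here K = c, S = sqrt(1 - c^2), t = sqrt(1 - c^2 \<lambda>), L = \<lambda>, and (x0, y0) = B(\<lambda>).\<close>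

lemma billiard_point_coordinates:
  fixes K S t L x0 y0 :: "'a::field"
  assumes S2: "S^2 = 1 - K^2" and K: "K \<noteq> 0" and S: "S \<noteq> 0" and t: "t \<noteq> 0"
    and t1: "1 - t^2 \<noteq> 0" and tS: "t^2 - S^2 \<noteq> 0"
    and L: "L = (1 - t^2)/K^2"
    and x0: "x0 = (1 - K^2)*L / (1 - K^2*L)" and y0: "y0 = K*S*L*(1 - L) / ((1 - K^2*L)*t)"
  shows "y0^2 = x0^3 + (-(1 + L))*x0^2 + L*x0" "y0 \<noteq> 0"
    "x0/y0 = K*S*t / (t^2 - S^2)" "1/y0 = K^3*t^3/S/(1 - t^2)/(t^2 - S^2)"
proof -
  have d: "1 - K^2*L = t^2"
    using K unfolding L by (simp add: field_simps)
  have mL: "1 - L = (t^2 - S^2)/K^2"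
    using K unfolding L S2 by (simp add: field_simps)
  have "L \<noteq> 0"
    using K t1 unfolding L by simp
  have "1 - L \<noteq> 0"
    using K tS unfolding mL by simp
  have x0': "x0 = (1 - K^2)*L/t^2"
    unfolding x0 d ..
  have y0': "y0 = K*S*L*(1 - L)/t^3"
    unfolding y0 d by (simp add: power2_eq_square power3_eq_cube)
  show "y0 \<noteq> 0"
    unfolding y0' using K S \<open>L \<noteq> 0\<close> \<open>1 - L \<noteq> 0\<close> t by simp
  have "x0/y0 = S^2*t/(K*S*(1 - L))"
    unfolding x0' y0' S2 using K S \<open>L \<noteq> 0\<close> \<open>1 - L \<noteq> 0\<close> t
    by (simp add: field_simps power2_eq_square power3_eq_cube)
  also have "\<dots> = K*S*t/(t^2 - S^2)"
    unfolding mL using K S tS by (simp add: field_simps power2_eq_square)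
  finally show "x0/y0 = K*S*t/(t^2 - S^2)" .
  have "y0 = S*(1 - t^2)*(t^2 - S^2)/(K^3*t^3)"
    unfolding y0' mL using K t by (simp add: L field_simps power2_eq_square power3_eq_cube)
  then show "1/y0 = K^3*t^3/S/(1 - t^2)/(t^2 - S^2)"
    by (simp add: divide_divide_eq_left mult.assoc)
  have "x0^3 + (-(1 + L))*x0^2 + L*x0 = x0*(x0 - 1)*(x0 - L)"
    by (simp add: algebra_simps power2_eq_square power3_eq_cube)
  also have "x0 - 1 = (L - 1)/t^2"
    unfolding x0' using t d by (simp add: field_simps)
  also have "x0 - L = K^2*L*(L - 1)/t^2"
    unfolding x0' using t d by (simp add: field_simps) algebra
  finally have "x0^3 + (-(1 + L))*x0^2 + L*x0 = (1 - K^2)*L*(L - 1)*(K^2*L*(L - 1))/t^6"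
    unfolding x0' using t by (simp add: field_simps)
  also have "\<dots> = y0^2"
    unfolding y0' S2[symmetric] using t by (simp add: field_simps) algebra
  finally show "y0^2 = x0^3 + (-(1 + L))*x0^2 + L*x0"
    by simp
qed

lemma subdegree_ge_lambda:
  fixes k :: "'a::field"
  assumes "k \<noteq> 0"
  shows "subdegree_ge ((1 - fls_X^2) / fls_const k ^ 2) 0"
proof (rule subdegree_ge_divide_unit)
  show "subdegree_ge (1 - fls_X^2) 0"
    using subdegree_ge_power[OF subdegree_ge_X, of 2]
    by (intro subdegree_ge_diff subdegree_ge_1) (erule subdegree_ge_mono, simp)
  show "subdegree_ge (fls_const k ^ 2) 0" "fls_const k ^ 2 $$ 0 \<noteq> 0"
    using assms by (simp_all flip: fls_const_power)
qed

lemma billiard_point_formal: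
  fixes k s :: "'a::field"
  defines "K \<equiv> fls_const k" and "S \<equiv> fls_const s" and "L \<equiv> (1 - fls_X^2) / fls_const k ^ 2"
  assumes k: "k \<noteq> 0" and s: "s \<noteq> 0" and s2: "s^2 = 1 - k^2"
    and x0: "x0 = (1 - K^2)*L / (1 - K^2*L)" and y0: "y0 = K*S*L*(1 - L) / ((1 - K^2*L)*fls_X)"
  shows "formal_group_point (-(1 + L)) L x0 y0" "(x0/y0) $$ 1 \<noteq> 0"
proof -
  have K: "K \<noteq> 0" and S: "S \<noteq> 0" and S2: "S^2 = 1 - K^2" and KL: "L = (1 - fls_X^2) / K^2"
    using k s s2
    by (simp_all add: K_def S_def L_def fls_const_power flip: fls_const_power fls_minus_const)
  have X2: "subdegree_ge (fls_X^2) 0"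
    using subdegree_ge_power[OF subdegree_ge_X, of 2] by (rule subdegree_ge_mono) simp
  have S2_const: "S^2 = fls_const (s^2)"
    by (simp add: S_def fls_const_power)
  have D1: "subdegree_ge (1 - fls_X^2) 0" "(1 - fls_X^2) $$ 0 \<noteq> 0"
    by (rule subdegree_ge_diff[OF subdegree_ge_1 X2]) simp
  have D2: "subdegree_ge (fls_X^2 - S^2) 0" "(fls_X^2 - S^2) $$ 0 \<noteq> 0"
    by (rule subdegree_ge_diff[OF X2]) (use s in \<open>simp_all add: S2_const\<close>)
  note pt = billiard_point_coordinates[OF S2 K S fls_X_nonzero _ _ KL x0 y0]
  note pt = pt[OF unit_subdegree(1)[OF D1] unit_subdegree(1)[OF D2]]
  have "subdegree_ge (K*S*fls_X) (0 + 0 + 1)"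
    unfolding K_def S_def by (intro subdegree_ge_mult) simp_all
  then have z: "subdegree_ge (x0/y0) 1"
    unfolding pt(3) using D2 by (simp add: subdegree_ge_divide_unit)
  have "subdegree_ge (K^3*fls_X^3) (int 3 * 0 + int 3 * 1)"
    unfolding K_def by (intro subdegree_ge_mult subdegree_ge_power) simp_all
  then have "subdegree_ge (K^3*fls_X^3) 3"
    by simp
  then have "subdegree_ge (K^3*fls_X^3/S) 3"
    by (rule subdegree_ge_divide_unit) (use s in \<open>simp_all add: S_def\<close>)
  then have w: "subdegree_ge (1/y0) 3"
    unfolding pt(4) by (rule subdegree_ge_divide_unit[OF subdegree_ge_divide_unit[OF _ D1] D2])
  show "formal_group_point (-(1 + L)) L x0 y0"
    unfolding formal_group_point_def using pt(1,2) z w by simp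
  have "fls_subdegree (K*S*fls_X) = 1" "fls_subdegree (fls_X^2 - S^2) = 0"
    using K S unit_subdegree(2)[OF D2] by (simp_all add: K_def S_def)
  then have "fls_subdegree (x0/y0) = 1"
    unfolding pt(3) using K S unit_subdegree(1)[OF D2] by (simp add: fls_divide_subdegree)
  moreover have "x0/y0 \<noteq> 0"
    unfolding pt(3) using K S unit_subdegree(1)[OF D2] by simp
  ultimately show "(x0/y0) $$ 1 \<noteq> 0"
    by (metis nth_fls_subdegree_nonzero)
qed

lemma fract_to_fls_K_const: "fract_to_fls (K_const a) = fls_const a"
  by (simp add: K_const_def fract_to_fls_Fract poly_to_fls_def fps_of_poly_const)

lemma fract_to_fls_K_sqrt: "fract_to_fls K_sqrt = fls_X"
  by (simp add: K_sqrt_def fract_to_fls_Fract poly_to_fls_def)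

lemma fract_to_fls_K_lambda:
  "fract_to_fls (K_lambda c) = (1 - fls_X^2) / fls_const (complex_of_real c) ^ 2"
proof -
  have "fls_const (complex_of_real (c^2)) = fls_const (complex_of_real c) ^ 2"
    by (simp only: of_real_power fls_const_power)
  then show ?thesis
    by (simp only: K_lambda_def fract_to_fls.hom_divide fract_to_fls.hom_diff fract_to_fls.hom_one
        fract_to_fls.hom_power fract_to_fls_K_const fract_to_fls_K_sqrt)
qed

lemma billiard_B_formal_group_point:
  fixes c :: real
  defines "L \<equiv> fract_to_fls (K_lambda c)"
  assumes "0 < c" and "c < 1"
  shows "\<exists>x0 y0. fract_to_fls.map_point (billiard_B c) = Some (x0, y0) \<and>
    formal_group_point (-(1 + L)) L x0 y0 \<and> (x0/y0) $$ 1 \<noteq> 0"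
proof -
  define k s where "k = complex_of_real c" and "s = complex_of_real (sqrt (1 - c^2))"
  define K S where "K = fls_const k" and "S = fls_const s"
  define x0 y0 where "x0 = (1 - K^2)*L / (1 - K^2*L)"
    and "y0 = K*S*L*(1 - L) / ((1 - K^2*L)*fls_X)"
  have "c^2 < 1"
    using assms by (simp add: abs_square_less_1)
  then have "k \<noteq> 0" "s \<noteq> 0" "s^2 = 1 - k^2"
    using assms by (simp_all add: k_def s_def flip: of_real_power)
  note B = billiard_point_formal[OF this, folded K_def S_def]
  have L: "L = (1 - fls_X^2) / K^2"
    by (simp add: L_def K_def k_def fract_to_fls_K_lambda)
  obtain xB yB where B_def: "billiard_B c = Some (xB, yB)"
    and xB: "xB = (1 - K_const k ^ 2) * K_lambda c / (1 - K_const k ^ 2 * K_lambda c)"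
    and yB: "yB = K_const k * K_const s * K_lambda c * (1 - K_lambda c) /
      ((1 - K_const k ^ 2 * K_lambda c) * K_sqrt)"
    by (simp add: billiard_B_def Let_def k_def s_def)
  have "fract_to_fls xB = x0" "fract_to_fls yB = y0"
    unfolding xB yB x0_def y0_def K_def S_def L_def
    by (simp_all only: fract_to_fls.hom_divide fract_to_fls.hom_mult fract_to_fls.hom_diff
        fract_to_fls.hom_one fract_to_fls.hom_power fract_to_fls_K_const fract_to_fls_K_sqrt)
  then show ?thesis
    using B[folded L, OF x0_def y0_def] by (simp add: B_def)
qed

theorem proposition2p1:
  fixes c :: real
  assumes "0 < c" and "c < 1"
  shows "on_curve (leg_a2 c) (leg_a4 c) 0 (billiard_B c)
         \<and> \<not> ec_torsion (leg_a2 c) (leg_a4 c) 0 (billiard_B c)"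
proof -
  define L where "L = fract_to_fls (K_lambda c)"
  have a2: "fract_to_fls (leg_a2 c) = -(1 + L)" and a4: "fract_to_fls (leg_a4 c) = L"
    by (simp_all add: leg_a2_def leg_a4_def L_def fract_to_fls.hom_simps)
  have "subdegree_ge L 0"
    using assms by (simp add: L_def fract_to_fls_K_lambda subdegree_ge_lambda)
  then have a: "subdegree_ge (-(1 + L)) 0"
    by (simp only: subdegree_ge_uminus_iff subdegree_ge_add subdegree_ge_1)
  obtain x0 y0 where map_B: "fract_to_fls.map_point (billiard_B c) = Some (x0, y0)"
    and B: "formal_group_point (-(1 + L)) L x0 y0" "(x0/y0) $$ 1 \<noteq> 0"
    using billiard_B_formal_group_point[OF assms] unfolding L_def by blast
  note transport = fract_to_fls.on_curve_map_point fract_to_fls.ec_torsion_map_point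
  note transport = transport[of "leg_a2 c" "leg_a4 c" 0 "billiard_B c", symmetric,
      unfolded map_B a2 a4 fract_to_fls.hom_zero]
  show ?thesis
    unfolding transport using formal_group_point_not_torsion[OF a \<open>subdegree_ge L 0\<close> B] B(1)
    by (simp add: on_curve_def formal_group_point_def)
qed

end
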